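(* Let $\mathcal E$ be an exchangeability system for a noncommutative probability space $(\mathcal A,\phi)$ and $X_1,\dots,X_n\in\mathcal A$. Then $$K_n(X_1,\dots,X_n)=\sum_{\pi\in\Pi_n}\phi_\pi(X_1,\dots,X_n)\,\mu(\pi,\hat1_n),$$ where $\mu$ is the Möbius function of the partition lattice $\Pi_n$.
   Context: A noncommutative probability space is a pair $(\mathcal A,\phi)$ of a complex unital algebra $\mathcal A$ and a unital linear functional $\phi$. An exchangeability system $\mathcal E$ for $(\mathcal A,\phi)$ consists of a noncommutative probability space $(\mathcal U,\tilde\phi)$ and a family $(\iota_k)_{k\in\mathbb N}$ of embeddings (injective unital algebra homomorphisms) $\iota_k:\mathcal A\to\mathcal A_k\subseteq\mathcal U$ with $\tilde\phi\circ\iota_k=\phi$; write $X^{(k)}=\iota_k(X)$. It is required that for all $X_1,\dots,X_n\in\mathcal A$, all indices $i_1,\dots,i_n\in\mathbb N$ and every bijection $\sigma$ of $\mathbb N$, $\tilde\phi(X_1^{(i_1)}\cdots X_n^{(i_n)})=\tilde\phi(X_1^{(\sigma(i_1))}\cdots X_n^{(\sigma(i_n))})$; so this value depends only on the kernel of $h:j\mapsto i_j$ (the partition of $[n]=\{1,\dots,n\}$ into the level sets of $h$), and for a partition $\pi$ it is denoted $\phi_\pi(X_1,\dots,X_n)$. $\Pi_n$ is the lattice of set partitions of $[n]$ ordered by refinement, $\hat1_n$ its maximal element (one block). For a primitive $n$-th root of unity $\omega$ put $X_j^\omega=\sum_{k=1}^n\omega^kX_j^{(k)}$ and $K_n(X_1,\dots,X_n)=\frac1n\tilde\phi(X_1^\omega\cdots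 X_n^\omega)$. *)

theory Defs
  imports Complex_Main "HOL-Library.Disjoint_Sets"
begin

definition complex_algebra :: "(complex \<Rightarrow> 'a::ring_1 \<Rightarrow> 'a) \<Rightarrow> bool" where
  "complex_algebra sc \<longleftrightarrow> vector_space sc \<and>
     (\<forall>c x y. sc c (x * y) = sc c x * y \<and> sc c (x * y) = x * sc c y)"

definition nc_prob_space :: "(complex \<Rightarrow> 'a::ring_1 \<Rightarrow> 'a) \<Rightarrow> ('a \<Rightarrow> complex) \<Rightarrow> bool" where
  "nc_prob_space sc phi \<longleftrightarrow> complex_algebra sc \<and>
     Vector_Spaces.linear sc (\<lambda>c z. c * z) phi \<and> phi 1 = 1"

definition alg_embedding ::
  "(complex \<Rightarrow> 'a::ring_1 \<Rightarrow> 'a) \<Rightarrow> (complex \<Rightarrow> 'u::ring_1 \<Rightarrow> 'u) \<Rightarrow> ('a \<Rightarrow> 'u) \<Rightarrow> bool" where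
  "alg_embedding sA sU f \<longleftrightarrow> inj f \<and> Vector_Spaces.linear sA sU f \<and> f 1 = 1 \<and>
     (\<forall>x y. f (x * y) = f x * f y)"

definition mixed_moment :: "('u::ring_1 \<Rightarrow> complex) \<Rightarrow> (nat \<Rightarrow> 'a \<Rightarrow> 'u) \<Rightarrow> 'a list \<Rightarrow> (nat \<Rightarrow> nat) \<Rightarrow> complex" where
  "mixed_moment phit iota xs h = phit (prod_list (map (\<lambda>j. iota (h j) (xs ! j)) [0..<length xs]))"

definition exchangeability_system ::
  "(complex \<Rightarrow> 'a::ring_1 \<Rightarrow> 'a) \<Rightarrow> ('a \<Rightarrow> complex) \<Rightarrow>
   (complex \<Rightarrow> 'u::ring_1 \<Rightarrow> 'u) \<Rightarrow> ('u \<Rightarrow> complex) \<Rightarrow> (nat \<Rightarrow> 'a \<Rightarrow> 'u) \<Rightarrow> bool" where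
  "exchangeability_system sA phi sU phit iota \<longleftrightarrow>
     nc_prob_space sA phi \<and> nc_prob_space sU phit \<and>
     (\<forall>k. alg_embedding sA sU (iota k) \<and> (\<forall>x. phit (iota k x) = phi x)) \<and>
     (\<forall>xs h \<sigma>. bij \<sigma> \<longrightarrow> mixed_moment phit iota xs (\<sigma> \<circ> h) = mixed_moment phit iota xs h)"

definition kernel_partition :: "nat \<Rightarrow> (nat \<Rightarrow> nat) \<Rightarrow> nat set set" where
  "kernel_partition n h = (\<lambda>i. {j \<in> {0..<n}. h j = h i}) ` {0..<n}"

text \<open>phi_pi(X_1,...,X_n): the common value of mixed moments whose index kernel is pi.\<close>
definition phi_pi :: "('u::ring_1 \<Rightarrow> complex) \<Rightarrow> (nat \<Rightarrow> 'a \<Rightarrow> 'u) \<Rightarrow> nat set set \<Rightarrow> 'a list \<Rightarrow> complex" where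
  "phi_pi phit iota \<pi> xs =
     mixed_moment phit iota xs (SOME h. kernel_partition (length xs) h = \<pi>)"

definition set_partitions :: "nat \<Rightarrow> nat set set set" where
  "set_partitions n = {P. partition_on {0..<n} P}"

definition refines :: "'a set set \<Rightarrow> 'a set set \<Rightarrow> bool" where
  "refines P Q \<longleftrightarrow> (\<forall>B\<in>P. \<exists>C\<in>Q. B \<subseteq> C)"

definition top_partition :: "nat \<Rightarrow> nat set set" where
  "top_partition n = {{0..<n}}"

definition moebius :: "'a set \<Rightarrow> ('a \<Rightarrow> 'a \<Rightarrow> bool) \<Rightarrow> 'a \<Rightarrow> 'a \<Rightarrow> int" where
  "moebius S le = (THE m.
     (\<forall>x y. \<not> (x \<in> S \<and> y \<in> S \<and> le x y) \<longrightarrow> m x y = 0) \<and>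
     (\<forall>x\<in>S. \<forall>y\<in>S. le x y \<longrightarrow>
        (\<Sum>z\<in>{z\<in>S. le x z \<and> le z y}. m x z) = (if x = y then 1 else 0)))"

definition primitive_root :: "nat \<Rightarrow> complex \<Rightarrow> bool" where
  "primitive_root n \<omega> \<longleftrightarrow> \<omega> ^ n = 1 \<and> (\<forall>k\<in>{1..<n}. \<omega> ^ k \<noteq> 1)"

definition K_cum :: "(complex \<Rightarrow> 'u::ring_1 \<Rightarrow> 'u) \<Rightarrow> ('u \<Rightarrow> complex) \<Rightarrow> (nat \<Rightarrow> 'a \<Rightarrow> 'u) \<Rightarrow>
    complex \<Rightarrow> 'a list \<Rightarrow> complex" where
  "K_cum sU phit iota \<omega> xs =
     (1 / of_nat (length xs)) *
     phit (prod_list (map (\<lambda>x. \<Sum>k=1..length xs. sU (\<omega> ^ k) (iota k x)) xs))"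

end

(* Expanding the product of the X_j^omega writes n K_n as the sum, over all index maps
   h : [n] -> [n], of the weight omega^(h_1 + ... + h_n) times the mixed moment of h, and by
   exchangeability that moment is phi_pi for pi = ker h. So n K_n = sum_pi phi_pi G(pi), where
   G(pi) is the total weight of the maps with kernel pi. Summing G over the partitions coarser
   than sigma gives the total weight F(sigma) of the maps that are constant on the blocks of
   sigma. F(1_n) = n because omega^n = 1, and F(sigma) = 0 otherwise: raising the values of h
   cyclically by one on a block B with 0 < |B| < n permutes these maps and multiplies each weight
   by omega^|B|, which is not 1. Moebius inversion of F then gives G(pi) = n mu(pi, 1_n). *)

theory Submission
  imports Defs "HOL-Library.Infinite_Set"
begin

section \<open>Moebius functions of finite posets\<close>

definition is_moebius_function :: "'a set \<Rightarrow> ('a \<Rightarrow> 'a \<Rightarrow> bool) \<Rightarrow> ('a \<Rightarrow> 'a \<Rightarrow> int) \<Rightarrow> bool" where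
  "is_moebius_function S le m \<longleftrightarrow>
     (\<forall>x y. \<not> (x \<in> S \<and> y \<in> S \<and> le x y) \<longrightarrow> m x y = 0) \<and>
     (\<forall>x\<in>S. \<forall>y\<in>S. le x y \<longrightarrow>
        (\<Sum>z\<in>{z\<in>S. le x z \<and> le z y}. m x z) = (if x = y then 1 else 0))"

lemma moebius_eq_The: "moebius S le = (THE m. is_moebius_function S le m)"
  unfolding moebius_def is_moebius_function_def ..

locale finite_poset =
  fixes S :: "'a set" and le :: "'a \<Rightarrow> 'a \<Rightarrow> bool"
  assumes finite_carrier: "finite S"
    and refl: "x \<in> S \<Longrightarrow> le x x"
    and antisym: "x \<in> S \<Longrightarrow> y \<in> S \<Longrightarrow> le x y \<Longrightarrow> le y x \<Longrightarrow> x = y"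
    and trans: "x \<in> S \<Longrightarrow> y \<in> S \<Longrightarrow> z \<in> S \<Longrightarrow> le x y \<Longrightarrow> le y z \<Longrightarrow> le x z"
begin

abbreviation interval :: "'a \<Rightarrow> 'a \<Rightarrow> 'a set" where
  "interval x y \<equiv> {z\<in>S. le x z \<and> le z y}"

lemma finite_interval: "finite (interval x y)"
  using finite_carrier by simp

lemma interval_refl: "x \<in> S \<Longrightarrow> interval x x = {x}"
  using refl antisym by blast

lemma card_interval_less:
  assumes "x \<in> S" "y \<in> S" "z \<in> interval x y" "z \<noteq> y"
  shows "card (interval x z) < card (interval x y)"
proof (rule psubset_card_mono[OF finite_interval])
  have "le x y" "le y y" "\<not> le y z"
    using assms trans[of x z y] refl[of y] antisym[of y z] by auto
  then show "interval x z \<subset> interval x y"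
    using assms trans by blast
qed

lemma sum_interval_remove_top:
  "x \<in> S \<Longrightarrow> y \<in> S \<Longrightarrow> le x y \<Longrightarrow>
    (\<Sum>z\<in>interval x y. f z) = f y + (\<Sum>z\<in>interval x y - {y}. f z)"
  using refl by (intro sum.remove finite_interval) auto

function moebius_rec :: "'a \<Rightarrow> 'a \<Rightarrow> int" where
  "moebius_rec x y = (if x \<in> S \<and> y \<in> S \<and> le x y then
     (if x = y then 1 else - (\<Sum>z\<in>interval x y - {y}. moebius_rec x z)) else 0)"
  by auto
termination
  by (relation "measure (\<lambda>(x, y). card (interval x y))") (auto intro: card_interval_less)

declare moebius_rec.simps [simp del]

lemma is_moebius_function_moebius_rec: "is_moebius_function S le moebius_rec"
  unfolding is_moebius_function_def
proof (intro conjI allI impI ballI)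
  fix x y
  assume "\<not> (x \<in> S \<and> y \<in> S \<and> le x y)"
  then show "moebius_rec x y = 0"
    by (subst moebius_rec.simps) auto
next
  fix x y
  assume xy: "x \<in> S" "y \<in> S" "le x y"
  then have "moebius_rec x y = (if x = y then 1 else - (\<Sum>z\<in>interval x y - {y}. moebius_rec x z))"
    by (simp add: moebius_rec.simps[of x y])
  with xy show "(\<Sum>z\<in>interval x y. moebius_rec x z) = (if x = y then 1 else 0)"
    by (simp add: sum_interval_remove_top interval_refl)
qed

lemma is_moebius_function_unique:
  assumes m: "is_moebius_function S le m" and m': "is_moebius_function S le m'"
  shows "m = m'"
proof (intro ext)
  fix x y
  show "m x y = m' x y"
  proof (induction "card (interval x y)" arbitrary: y rule: less_induct)
    case less
    show ?case
    proof (cases "x \<in> S \<and> y \<in> S \<and> le x y")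
      case False
      with m m' show ?thesis
        unfolding is_moebius_function_def by metis
    next
      case True
      have below: "(\<Sum>z\<in>interval x y - {y}. m x z) = (\<Sum>z\<in>interval x y - {y}. m' x z)"
        using less True card_interval_less by (intro sum.cong) auto
      from m m' True have "(\<Sum>z\<in>interval x y. m x z) = (\<Sum>z\<in>interval x y. m' x z)"
        unfolding is_moebius_function_def by simp
      with True below show ?thesis
        by (simp add: sum_interval_remove_top)
    qed
  qed
qed

lemma is_moebius_function_moebius: "is_moebius_function S le (moebius S le)"
  unfolding moebius_eq_The
  by (rule theI[of "is_moebius_function S le", OF is_moebius_function_moebius_rec])
    (rule is_moebius_function_unique[OF _ is_moebius_function_moebius_rec])

lemma sum_moebius_interval:
  assumes "x \<in> S" "y \<in> S"
  shows "(\<Sum>z\<in>interval x y. moebius S le x z) = (if x = y then 1 else 0)"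
proof (cases "le x y")
  case True
  with assms is_moebius_function_moebius show ?thesis
    unfolding is_moebius_function_def by blast
next
  case False
  then have empty: "interval x y = {}" and "x \<noteq> y"
    using assms trans refl by blast+
  then show ?thesis
    by (simp only: empty sum.empty) simp
qed

lemma moebius_inversion_from_above:
  fixes F G :: "'a \<Rightarrow> 'b::comm_ring_1"
  assumes F: "\<And>s. s \<in> S \<Longrightarrow> F s = (\<Sum>t\<in>{t\<in>S. le s t}. G t)" and p: "p \<in> S"
  shows "(\<Sum>s\<in>{s\<in>S. le p s}. of_int (moebius S le p s) * F s) = G p"
proof -
  have "(\<Sum>s\<in>{s\<in>S. le p s}. of_int (moebius S le p s) * F s) =
      (\<Sum>s\<in>{s\<in>S. le p s}. \<Sum>t\<in>{t\<in>S. le s t}. of_int (moebius S le p s) * G t)"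
    using F by (simp add: sum_distrib_left)
  also have "\<dots> = (\<Sum>t\<in>S. \<Sum>s\<in>{s\<in>{s\<in>S. le p s}. le s t}. of_int (moebius S le p s) * G t)"
    using finite_carrier by (intro sum.swap_restrict) simp_all
  also have "\<dots> = (\<Sum>t\<in>S. of_int (\<Sum>s\<in>interval p t. moebius S le p s) * G t)"
    by (simp add: sum_distrib_right)
  also have "\<dots> = (\<Sum>t\<in>S. if p = t then G t else 0)"
    using p by (intro sum.cong) (simp_all add: sum_moebius_interval)
  also have "\<dots> = G p"
    using p finite_carrier by simp
  finally show ?thesis .
qed

end

section \<open>Set partitions\<close>

lemma kernel_partition_in_set_partitions: "kernel_partition n h \<in> set_partitions n"
  unfolding set_partitions_def kernel_partition_def mem_Collect_eq
  by (rule partition_onI) (auto simp: disjnt_def)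

lemma finite_set_partitions: "finite (set_partitions n)"
  unfolding set_partitions_def by (rule finitely_many_partition_on) simp

lemma finite_poset_set_partitions: "finite_poset (set_partitions n) refines"
proof
  show "finite (set_partitions n)"
    by (rule finite_set_partitions)
  show "refines P P" if "P \<in> set_partitions n" for P
    unfolding refines_def by blast
  show "P = Q" if "P \<in> set_partitions n" "Q \<in> set_partitions n" "refines P Q" "refines Q P" for P Q
    using that unfolding set_partitions_def refines_def
    by (intro Disjoint_Sets.refines_asym[of "{0..<n}"]) (simp_all add: Disjoint_Sets.refines_def)
  show "refines P R" if "P \<in> set_partitions n" "refines P Q" "refines Q R" for P Q R
    using that unfolding refines_def by (meson order_trans)
qed

lemma top_partition_in_set_partitions: "n > 0 \<Longrightarrow> top_partition n \<in> set_partitions n"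
  unfolding set_partitions_def top_partition_def by (simp add: partition_on_space)

lemma refines_top_partition: "P \<in> set_partitions n \<Longrightarrow> refines P (top_partition n)"
  unfolding set_partitions_def top_partition_def refines_def by (auto dest: partition_onD1)

lemma set_partitions_blockD:
  assumes "P \<in> set_partitions n" "B \<in> P"
  shows "B \<noteq> {}" "B \<subseteq> {0..<n}"
  using assms unfolding set_partitions_def partition_on_def by auto

lemma disjoint_same_block_iff:
  assumes "disjoint P" "B \<in> P" "C \<in> P" "i \<in> C" "j \<in> C"
  shows "i \<in> B \<longleftrightarrow> j \<in> B"
proof (cases "C = B")
  case False
  with assms have "C \<inter> B = {}"
    by (simp add: disjointD)
  with assms show ?thesis by blast
qed (use assms in simp)

lemma refines_kernel_partition_iff:
  assumes "P \<in> set_partitions n"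
  shows "refines P (kernel_partition n h) \<longleftrightarrow> (\<forall>B\<in>P. \<forall>i\<in>B. \<forall>j\<in>B. h i = h j)"
proof
  assume refines: "refines P (kernel_partition n h)"
  show "\<forall>B\<in>P. \<forall>i\<in>B. \<forall>j\<in>B. h i = h j"
  proof (intro ballI)
    fix B i j
    assume "B \<in> P" "i \<in> B" "j \<in> B"
    moreover obtain k where "B \<subseteq> {l \<in> {0..<n}. h l = h k}"
      using refines \<open>B \<in> P\<close> unfolding refines_def kernel_partition_def by blast
    ultimately have "h i = h k" "h j = h k" by blast+
    then show "h i = h j" by simp
  qed
next
  assume const: "\<forall>B\<in>P. \<forall>i\<in>B. \<forall>j\<in>B. h i = h j"
  show "refines P (kernel_partition n h)"
    unfolding refines_def kernel_partition_def
  proof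
    fix B
    assume B: "B \<in> P"
    have "B \<noteq> {}" and sub: "B \<subseteq> {0..<n}"
      using set_partitions_blockD[OF assms B] by simp_all
    then obtain i where "i \<in> B" by blast
    with sub const B have "B \<subseteq> {j \<in> {0..<n}. h j = h i}" and "i \<in> {0..<n}"
      by blast+
    then show "\<exists>C\<in>(\<lambda>i. {j \<in> {0..<n}. h j = h i}) ` {0..<n}. B \<subseteq> C"
      by blast
  qed
qed

lemma exists_proper_block:
  assumes P: "P \<in> set_partitions n" and "P \<noteq> top_partition n" and "n > 0"
  obtains B where "B \<in> P" "B \<noteq> {}" "B \<subset> {0..<n}"
proof -
  have cover: "\<Union>P = {0..<n}" and nonempty: "{} \<notin> P" and disj: "disjoint P"
    using P unfolding set_partitions_def partition_on_def by simp_all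
  obtain B where B: "B \<in> P"
    using cover \<open>n > 0\<close> by fastforce
  have "B \<noteq> {0..<n}"
  proof
    assume full: "B = {0..<n}"
    have "C = B" if C: "C \<in> P" for C
    proof (rule ccontr)
      assume "C \<noteq> B"
      then have "C \<inter> B = {}"
        using disjointD[OF disj C B] by simp
      moreover have "C \<subseteq> B" "C \<noteq> {}"
        using C cover full nonempty by auto
      ultimately show False by blast
    qed
    with B full \<open>P \<noteq> top_partition n\<close> show False
      unfolding top_partition_def by blast
  qed
  with B cover nonempty show ?thesis
    using that by blast
qed

section \<open>Moments depend only on the kernel\<close>

lemma finite_inj_on_extends_to_bij:
  fixes f :: "nat \<Rightarrow> nat"
  assumes "finite A" "inj_on f A"
  obtains \<sigma> where "bij \<sigma>" "\<And>x. x \<in> A \<Longrightarrow> \<sigma> x = f x"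
proof -
  have "infinite (- A)" "infinite (- f ` A)"
    using assms(1) by (simp_all add: Compl_eq_Diff_UNIV Diff_infinite_finite)
  then have "bij_betw (Infinite_Set.enumerate (- f ` A) \<circ> inv_into UNIV (Infinite_Set.enumerate (- A))) (- A) (- f ` A)"
    by (intro bij_betw_trans[OF bij_betw_inv_into] bij_enumerate)
  then obtain g where g: "bij_betw g (- A) (- f ` A)" ..
  define \<sigma> where "\<sigma> x = (if x \<in> A then f x else g x)" for x
  have "bij_betw \<sigma> A (f ` A)"
    using assms(2) unfolding \<sigma>_def bij_betw_def inj_on_def by auto
  moreover have "bij_betw \<sigma> (- A) (- f ` A)"
    using g unfolding \<sigma>_def by (rule bij_betw_cong[THEN iffD1, rotated]) auto
  ultimately have "bij_betw \<sigma> (A \<union> - A) (f ` A \<union> - f ` A)"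
    by (rule bij_betw_combine) auto
  then show ?thesis
    using that unfolding \<sigma>_def by simp
qed

lemma factor_through_same_kernel:
  assumes "\<And>i j. i \<in> A \<Longrightarrow> j \<in> A \<Longrightarrow> h i = h j \<longleftrightarrow> g i = g j"
  obtains f where "inj_on f (g ` A)" "\<And>i. i \<in> A \<Longrightarrow> h i = f (g i)"
proof
  define f where "f = h \<circ> inv_into A g"
  show h_eq: "h i = f (g i)" if "i \<in> A" for i
    using that assms[of "inv_into A g (g i)" i] by (simp add: f_def inv_into_into f_inv_into_f)
  show "inj_on f (g ` A)"
  proof (rule inj_onI)
    fix u v
    assume "u \<in> g ` A" "v \<in> g ` A" "f u = f v"
    then obtain i j where "i \<in> A" "j \<in> A" "u = g i" "v = g j" "h i = h j"
      using h_eq by auto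
    with assms show "u = v" by blast
  qed
qed

lemma kernel_partition_eqD:
  assumes eq: "kernel_partition n h = kernel_partition n g" and "i < n" "j < n"
  shows "h i = h j \<longleftrightarrow> g i = g j"
proof -
  have "{l \<in> {0..<n}. h l = h i} \<in> kernel_partition n h"
    using \<open>i < n\<close> unfolding kernel_partition_def by (intro imageI) simp
  then have "{l \<in> {0..<n}. h l = h i} \<in> kernel_partition n g"
    using eq by simp
  then obtain k where block: "{l \<in> {0..<n}. h l = h i} = {l \<in> {0..<n}. g l = g k}"
    unfolding kernel_partition_def by (rule imageE)
  have "i \<in> {l \<in> {0..<n}. h l = h i}"
    using \<open>i < n\<close> by simp
  then have "g i = g k"
    unfolding block by simp
  with block have "{l \<in> {0..<n}. h l = h i} = {l \<in> {0..<n}. g l = g i}"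
    by simp
  from eqset_imp_iff[OF this, of j] \<open>j < n\<close> show ?thesis
    by auto
qed

lemma mixed_moment_cong:
  assumes "\<And>j. j < length xs \<Longrightarrow> h j = g j"
  shows "mixed_moment phit iota xs h = mixed_moment phit iota xs g"
  unfolding mixed_moment_def
  by (intro arg_cong[where f = phit] arg_cong[where f = prod_list] map_cong) (simp_all add: assms)

lemma mixed_moment_kernel_invariant:
  assumes exch: "exchangeability_system sA phi sU phit iota"
    and eq: "kernel_partition (length xs) h = kernel_partition (length xs) g"
  shows "mixed_moment phit iota xs h = mixed_moment phit iota xs g"
proof -
  let ?A = "{0..<length xs}"
  have "h i = h j \<longleftrightarrow> g i = g j" if "i \<in> ?A" "j \<in> ?A" for i j
    using kernel_partition_eqD[OF eq] that by simp
  then obtain f where inj: "inj_on f (g ` ?A)" and hf: "\<And>i. i \<in> ?A \<Longrightarrow> h i = f (g i)"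
    using factor_through_same_kernel[of ?A h g] by blast
  obtain \<sigma> where "bij \<sigma>" and \<sigma>: "\<And>x. x \<in> g ` ?A \<Longrightarrow> \<sigma> x = f x"
    using finite_inj_on_extends_to_bij[OF finite_imageI[OF finite_atLeastLessThan] inj] by blast
  have "mixed_moment phit iota xs h = mixed_moment phit iota xs (\<sigma> \<circ> g)"
    by (rule mixed_moment_cong) (simp add: hf \<sigma>)
  also have "\<dots> = mixed_moment phit iota xs g"
    using exch \<open>bij \<sigma>\<close> unfolding exchangeability_system_def by simp
  finally show ?thesis .
qed

lemma phi_pi_kernel_partition:
  assumes "exchangeability_system sA phi sU phit iota"
  shows "phi_pi phit iota (kernel_partition (length xs) h) xs = mixed_moment phit iota xs h"
  unfolding phi_pi_def
  by (rule mixed_moment_kernel_invariant[OF assms], rule someI[of _ h], rule refl)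

section \<open>Root-of-unity weights of index maps\<close>

abbreviation index_functions :: "nat \<Rightarrow> (nat \<Rightarrow> nat) set" where
  "index_functions n \<equiv> {0..<n} \<rightarrow>\<^sub>E {1..n}"

definition root_weight :: "complex \<Rightarrow> nat \<Rightarrow> (nat \<Rightarrow> nat) \<Rightarrow> complex" where
  "root_weight \<omega> n h = (\<Prod>j\<in>{0..<n}. \<omega> ^ h j)"

lemma sum_eq_0_if_scaled_by_injection:
  fixes w :: "'a \<Rightarrow> 'b::idom"
  assumes "finite A" "T ` A \<subseteq> A" "inj_on T A"
    and scaled: "\<And>a. a \<in> A \<Longrightarrow> w (T a) = c * w a" and "c \<noteq> 1"
  shows "sum w A = 0"
proof -
  have "sum w A = sum w (T ` A)"
    using endo_inj_surj[OF assms(1-3)] by simp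
  also have "\<dots> = c * sum w A"
    using assms(3) scaled by (simp add: sum.reindex sum_distrib_left)
  finally have "(1 - c) * sum w A = 0"
    by (simp add: algebra_simps)
  with \<open>c \<noteq> 1\<close> show ?thesis by simp
qed

lemma constant_PiE_eq_image:
  assumes "i\<^sub>0 \<in> I"
  shows "{h \<in> I \<rightarrow>\<^sub>E S. \<forall>i\<in>I. \<forall>j\<in>I. h i = h j} = (\<lambda>k. \<lambda>j\<in>I. k) ` S"
proof (intro equalityI subsetI)
  fix h
  assume "h \<in> {h \<in> I \<rightarrow>\<^sub>E S. \<forall>i\<in>I. \<forall>j\<in>I. h i = h j}"
  then have h: "h \<in> I \<rightarrow>\<^sub>E S" and const: "\<forall>i\<in>I. \<forall>j\<in>I. h i = h j"
    by blast+
  have "h = (\<lambda>j\<in>I. h i\<^sub>0)"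
  proof
    fix j
    show "h j = (\<lambda>j\<in>I. h i\<^sub>0) j"
      using const[rule_format, OF _ assms, of j] PiE_arb[OF h, of j] by (cases "j \<in> I") simp_all
  qed
  moreover have "h i\<^sub>0 \<in> S"
    using h assms by (rule PiE_mem)
  ultimately show "h \<in> (\<lambda>k. \<lambda>j\<in>I. k) ` S"
    by (rule image_eqI)
qed auto

lemma inj_on_constant_restrict: "i\<^sub>0 \<in> I \<Longrightarrow> inj_on (\<lambda>k. \<lambda>j\<in>I. k) S"
  by (rule inj_onI) (drule fun_cong[of _ _ i\<^sub>0], simp)

lemma sum_root_weight_refines_top:
  assumes "\<omega> ^ n = 1" "n > 0"
  shows "(\<Sum>h\<in>{h \<in> index_functions n. refines (top_partition n) (kernel_partition n h)}.
      root_weight \<omega> n h) = of_nat n"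
proof -
  let ?const = "\<lambda>k. \<lambda>j\<in>{0..<n}. k"
  have "{h \<in> index_functions n. refines (top_partition n) (kernel_partition n h)} = ?const ` {1..n}"
    using refines_kernel_partition_iff[OF top_partition_in_set_partitions[OF \<open>n > 0\<close>]]
      constant_PiE_eq_image[of 0 "{0..<n}" "{1..n}"] \<open>n > 0\<close>
    unfolding top_partition_def by simp
  moreover have "root_weight \<omega> n (?const k) = 1" for k
  proof -
    have "root_weight \<omega> n (?const k) = (\<omega> ^ k) ^ n"
      unfolding root_weight_def by (simp add: prod.cong[OF refl, of _ _ "\<lambda>_. \<omega> ^ k"])
    with \<open>\<omega> ^ n = 1\<close> show ?thesis
      by (simp add: power_mult[symmetric] power_mult_distrib mult.commute[of k n] power_mult)
  qed
  ultimately show ?thesis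
    using inj_on_constant_restrict[of 0 "{0..<n}" "{1..n}"] \<open>n > 0\<close> by (simp add: sum.reindex)
qed

definition cyclic_succ :: "nat \<Rightarrow> nat \<Rightarrow> nat" where
  "cyclic_succ n k = (if k = n then 1 else k + 1)"

lemma cyclic_succ_in: "k \<in> {1..n} \<Longrightarrow> cyclic_succ n k \<in> {1..n}"
  unfolding cyclic_succ_def by auto

lemma inj_on_cyclic_succ: "inj_on (cyclic_succ n) {1..n}"
proof (rule inj_onI)
  fix a b
  assume "a \<in> {1..n}" "b \<in> {1..n}" "cyclic_succ n a = cyclic_succ n b"
  then show "a = b"
    unfolding cyclic_succ_def by (cases "a = n"; cases "b = n") simp_all
qed

lemma power_cyclic_succ: "(\<omega>::'a::monoid_mult) ^ n = 1 \<Longrightarrow> \<omega> ^ cyclic_succ n k = \<omega> * \<omega> ^ k"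
  unfolding cyclic_succ_def by simp

definition rotate_on :: "nat \<Rightarrow> nat set \<Rightarrow> (nat \<Rightarrow> nat) \<Rightarrow> nat \<Rightarrow> nat" where
  "rotate_on n B h j = (if j \<in> B then cyclic_succ n (h j) else h j)"

lemma rotate_on_in_index_functions:
  assumes "B \<subseteq> {0..<n}" "h \<in> index_functions n"
  shows "rotate_on n B h \<in> index_functions n"
proof -
  have "rotate_on n B h j \<in> {1..n}" if "j \<in> {0..<n}" for j
    using PiE_mem[OF assms(2) that] cyclic_succ_in[OF PiE_mem[OF assms(2) that]]
    unfolding rotate_on_def by simp
  moreover have "rotate_on n B h j = undefined" if "j \<notin> {0..<n}" for j
    using that assms PiE_arb[OF assms(2) that] unfolding rotate_on_def by auto
  ultimately show ?thesis
    unfolding PiE_iff extensional_def by blast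
qed

lemma rotate_on_block_constant:
  assumes "disjoint P" "B \<in> P" and const: "\<forall>C\<in>P. \<forall>i\<in>C. \<forall>j\<in>C. h i = h j"
  shows "\<forall>C\<in>P. \<forall>i\<in>C. \<forall>j\<in>C. rotate_on n B h i = rotate_on n B h j"
proof (intro ballI)
  fix C i j
  assume "C \<in> P" "i \<in> C" "j \<in> C"
  then show "rotate_on n B h i = rotate_on n B h j"
    using const[rule_format, OF \<open>C \<in> P\<close> \<open>i \<in> C\<close> \<open>j \<in> C\<close>]
      disjoint_same_block_iff[OF assms(1,2) \<open>C \<in> P\<close> \<open>i \<in> C\<close> \<open>j \<in> C\<close>]
    unfolding rotate_on_def by simp
qed

lemma inj_on_rotate_on:
  assumes "B \<subseteq> {0..<n}"
  shows "inj_on (rotate_on n B) (index_functions n)"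
proof (rule inj_onI, rule ext)
  fix g h j
  assume g: "g \<in> index_functions n" and h: "h \<in> index_functions n" and eq: "rotate_on n B g = rotate_on n B h"
  show "g j = h j"
  proof (cases "j \<in> B")
    case True
    with assms have "g j \<in> {1..n}" "h j \<in> {1..n}"
      using PiE_mem[OF g] PiE_mem[OF h] by blast+
    moreover have "cyclic_succ n (g j) = cyclic_succ n (h j)"
      using fun_cong[OF eq, of j] True by (simp add: rotate_on_def)
    ultimately show ?thesis
      by (rule inj_onD[OF inj_on_cyclic_succ, rotated 1])
  next
    case False
    then show ?thesis
      using fun_cong[OF eq, of j] by (simp add: rotate_on_def)
  qed
qed

lemma root_weight_rotate_on:
  assumes "\<omega> ^ n = 1" "B \<subseteq> {0..<n}"
  shows "root_weight \<omega> n (rotate_on n B h) = \<omega> ^ card B * root_weight \<omega> n h"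
proof -
  have "root_weight \<omega> n (rotate_on n B h) = (\<Prod>j\<in>{0..<n}. (if j \<in> B then \<omega> else 1) * \<omega> ^ h j)"
    unfolding root_weight_def rotate_on_def using assms(1)
    by (intro prod.cong refl) (simp add: power_cyclic_succ)
  also have "\<dots> = (\<Prod>j\<in>{0..<n}. if j \<in> B then \<omega> else 1) * root_weight \<omega> n h"
    unfolding root_weight_def by (rule prod.distrib)
  also have "(\<Prod>j\<in>{0..<n}. if j \<in> B then \<omega> else 1) = \<omega> ^ card B"
    using assms(2) by (simp add: prod.If_cases Int_absorb1)
  finally show ?thesis .
qed

lemma sum_root_weight_refines_proper:
  assumes root: "primitive_root n \<omega>" and P: "P \<in> set_partitions n"
    and "P \<noteq> top_partition n" "n > 0"
  shows "(\<Sum>h\<in>{h \<in> index_functions n. refines P (kernel_partition n h)}. root_weight \<omega> n h) = 0"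
proof -
  obtain B where B: "B \<in> P" "B \<noteq> {}" "B \<subset> {0..<n}"
    using exists_proper_block[OF P \<open>P \<noteq> top_partition n\<close> \<open>n > 0\<close>] .
  let ?A = "{h \<in> index_functions n. \<forall>C\<in>P. \<forall>i\<in>C. \<forall>j\<in>C. h i = h j}"
  have "disjoint P"
    using P unfolding set_partitions_def partition_on_def by simp
  have maps: "rotate_on n B ` ?A \<subseteq> ?A"
  proof (rule image_subsetI)
    fix h
    assume "h \<in> ?A"
    then have "h \<in> index_functions n" and const: "\<forall>C\<in>P. \<forall>i\<in>C. \<forall>j\<in>C. h i = h j"
      by blast+
    with B(3) have "rotate_on n B h \<in> index_functions n"
      by (intro rotate_on_in_index_functions) blast+
    moreover have "\<forall>C\<in>P. \<forall>i\<in>C. \<forall>j\<in>C. rotate_on n B h i = rotate_on n B h j"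
      by (rule rotate_on_block_constant[OF \<open>disjoint P\<close> B(1) const])
    ultimately show "rotate_on n B h \<in> ?A"
      by blast
  qed
  have inj: "inj_on (rotate_on n B) ?A"
    using B(3) by (intro inj_on_subset[OF inj_on_rotate_on]) blast+
  have "\<omega> ^ n = 1"
    using root unfolding primitive_root_def by blast
  have "finite B"
    using B(3) finite_subset by blast
  then have "0 < card B" "card B < n"
    using B(2,3) psubset_card_mono[of "{0..<n}" B] by (simp_all add: card_gt_0_iff)
  with root have nonone: "\<omega> ^ card B \<noteq> 1"
    unfolding primitive_root_def by simp
  have fin: "finite ?A"
    by (simp add: finite_PiE)
  have scale: "root_weight \<omega> n (rotate_on n B h) = \<omega> ^ card B * root_weight \<omega> n h" for h
    by (rule root_weight_rotate_on[OF \<open>\<omega> ^ n = 1\<close>]) (use B(3) in blast)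
  have "sum (root_weight \<omega> n) ?A = 0"
    by (rule sum_eq_0_if_scaled_by_injection[OF fin maps inj _ nonone]) (rule scale)
  moreover have "{h \<in> index_functions n. refines P (kernel_partition n h)} = ?A"
    by (simp add: refines_kernel_partition_iff[OF P])
  ultimately show ?thesis by simp
qed

lemma sum_root_weight_refines_kernel:
  assumes root: "primitive_root n \<omega>" and "n > 0" and P: "P \<in> set_partitions n"
  shows "(\<Sum>h\<in>{h \<in> index_functions n. refines P (kernel_partition n h)}. root_weight \<omega> n h) =
    (if P = top_partition n then of_nat n else 0)"
proof (cases "P = top_partition n")
  case True
  have "\<omega> ^ n = 1"
    using root unfolding primitive_root_def by blast
  with True show ?thesis
    using sum_root_weight_refines_top[OF _ \<open>n > 0\<close>] by simp
next
  case False
  with sum_root_weight_refines_proper[OF root P _ \<open>n > 0\<close>] show ?thesis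
    by simp
qed

lemma sum_filter_by_image:
  assumes "finite H" "finite T" "f ` H \<subseteq> T"
  shows "(\<Sum>h\<in>{h\<in>H. Q (f h)}. w h) = (\<Sum>t\<in>{t\<in>T. Q t}. \<Sum>h\<in>{h\<in>H. f h = t}. w h)"
proof -
  have "(\<Sum>h\<in>{h\<in>H. Q (f h)}. w h) = (\<Sum>t\<in>{t\<in>T. Q t}. \<Sum>h\<in>{h\<in>{h\<in>H. Q (f h)}. f h = t}. w h)"
    using assms by (intro sum.group[symmetric]) auto
  also have "\<dots> = (\<Sum>t\<in>{t\<in>T. Q t}. \<Sum>h\<in>{h\<in>H. f h = t}. w h)"
    by (intro sum.cong refl) auto
  finally show ?thesis .
qed

lemma sum_root_weight_kernel_eq_moebius:
  assumes root: "primitive_root n \<omega>" and "n > 0" and \<pi>: "\<pi> \<in> set_partitions n"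
  shows "(\<Sum>h\<in>{h \<in> index_functions n. kernel_partition n h = \<pi>}. root_weight \<omega> n h) =
    of_nat n * of_int (moebius (set_partitions n) refines \<pi> (top_partition n))"
proof -
  interpret finite_poset "set_partitions n" refines
    by (rule finite_poset_set_partitions)
  let ?\<mu> = "moebius (set_partitions n) refines"
  define G where "G \<tau> = (\<Sum>h\<in>{h \<in> index_functions n. kernel_partition n h = \<tau>}. root_weight \<omega> n h)"
    for \<tau>
  define F where "F \<sigma> = (\<Sum>h\<in>{h \<in> index_functions n. refines \<sigma> (kernel_partition n h)}. root_weight \<omega> n h)"
    for \<sigma>
  have F_G: "F \<sigma> = (\<Sum>\<tau>\<in>{\<tau> \<in> set_partitions n. refines \<sigma> \<tau>}. G \<tau>)" for \<sigma>
    unfolding F_def G_def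
    by (rule sum_filter_by_image)
      (auto simp: finite_set_partitions kernel_partition_in_set_partitions intro: finite_PiE)
  have F_eval: "F \<sigma> = (if \<sigma> = top_partition n then of_nat n else 0)" if "\<sigma> \<in> set_partitions n" for \<sigma>
    unfolding F_def using root \<open>n > 0\<close> that by (rule sum_root_weight_refines_kernel)
  have "G \<pi> = (\<Sum>\<sigma>\<in>{\<sigma> \<in> set_partitions n. refines \<pi> \<sigma>}. of_int (?\<mu> \<pi> \<sigma>) * F \<sigma>)"
    using F_G \<pi> by (intro moebius_inversion_from_above[symmetric])
  also have "\<dots> = (\<Sum>\<sigma>\<in>{\<sigma> \<in> set_partitions n. refines \<pi> \<sigma>}.
      if \<sigma> = top_partition n then of_int (?\<mu> \<pi> \<sigma>) * of_nat n else 0)"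
    by (intro sum.cong refl) (auto simp: F_eval)
  also have "\<dots> = of_int (?\<mu> \<pi> (top_partition n)) * of_nat n"
    using \<pi> \<open>n > 0\<close> by (simp add: top_partition_in_set_partitions refines_top_partition finite_set_partitions)
  finally show ?thesis
    unfolding G_def by (simp add: mult.commute)
qed

section \<open>Expansion of K_n\<close>

lemma prod_list_sum_distrib:
  fixes f :: "nat \<Rightarrow> 'k \<Rightarrow> 'a::semiring_1"
  assumes "finite K"
  shows "prod_list (map (\<lambda>j. \<Sum>k\<in>K. f j k) [0..<m]) =
    (\<Sum>h\<in>{0..<m} \<rightarrow>\<^sub>E K. prod_list (map (\<lambda>j. f j (h j)) [0..<m]))"
proof (induction m)
  case (Suc m)
  let ?p = "\<lambda>h. prod_list (map (\<lambda>j. f j (h j)) [0..<m])"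
  have "prod_list (map (\<lambda>j. \<Sum>k\<in>K. f j k) [0..<Suc m]) = (\<Sum>h\<in>{0..<m} \<rightarrow>\<^sub>E K. ?p h) * (\<Sum>k\<in>K. f m k)"
    using Suc by simp
  also have "\<dots> = (\<Sum>(k, h)\<in>K \<times> ({0..<m} \<rightarrow>\<^sub>E K). ?p h * f m k)"
    unfolding sum_product by (subst sum.swap) (simp add: sum.cartesian_product)
  also have "\<dots> = (\<Sum>(k, h)\<in>K \<times> ({0..<m} \<rightarrow>\<^sub>E K). prod_list (map (\<lambda>j. f j ((h(m := k)) j)) [0..<Suc m]))"
    by (intro sum.cong refl) (auto intro!: arg_cong2[where f = times] arg_cong[where f = prod_list] map_cong)
  also have "\<dots> = (\<Sum>h\<in>(\<lambda>(k, h). h(m := k)) ` (K \<times> ({0..<m} \<rightarrow>\<^sub>E K)). prod_list (map (\<lambda>j. f j (h j)) [0..<Suc m]))"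
    by (subst sum.reindex) (auto intro!: inj_combinator simp: case_prod_beta)
  also have "(\<lambda>(k, h). h(m := k)) ` (K \<times> ({0..<m} \<rightarrow>\<^sub>E K)) = {0..<Suc m} \<rightarrow>\<^sub>E K"
    using PiE_insert_eq[of m "{0..<m}" "\<lambda>_. K"] by (simp add: atLeast0_lessThan_Suc)
  finally show ?case .
qed simp

lemma complex_algebra_prod_list_scale:
  assumes "complex_algebra sc"
  shows "prod_list (map (\<lambda>j. sc (c j) (u j)) js) = sc (prod_list (map c js)) (prod_list (map u js))"
proof (induction js)
  case Nil
  with assms show ?case
    by (simp add: complex_algebra_def vector_space_def)
next
  case (Cons a js)
  have scale_scale: "sc x (sc y z) = sc (x * y) z" for x y z
    using assms by (simp add: complex_algebra_def vector_space_def)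
  have "sc x p * sc y q = sc x (sc y (p * q))" for x y p q
    using assms unfolding complex_algebra_def by metis
  with Cons show ?case
    by (simp add: scale_scale)
qed

lemma K_cum_expansion:
  assumes "nc_prob_space sU phit"
  shows "K_cum sU phit iota \<omega> xs = 1 / of_nat (length xs) *
    (\<Sum>h\<in>index_functions (length xs). root_weight \<omega> (length xs) h * mixed_moment phit iota xs h)"
proof -
  let ?n = "length xs"
  have alg: "complex_algebra sU" and hom: "module_hom sU (\<lambda>c z. c * z) phit"
    using assms module_hom_iff_linear unfolding nc_prob_space_def by blast+
  have "prod_list (map (\<lambda>x. \<Sum>k=1..?n. sU (\<omega> ^ k) (iota k x)) xs) =
      prod_list (map (\<lambda>j. \<Sum>k\<in>{1..?n}. sU (\<omega> ^ k) (iota k (xs ! j))) [0..<?n])"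
    by (subst map_nth[symmetric, of xs]) (simp only: map_map comp_def length_map)
  also have "\<dots> = (\<Sum>h\<in>index_functions ?n. prod_list (map (\<lambda>j. sU (\<omega> ^ h j) (iota (h j) (xs ! j))) [0..<?n]))"
    by (rule prod_list_sum_distrib) simp
  also have "\<dots> = (\<Sum>h\<in>index_functions ?n. sU (root_weight \<omega> ?n h) (prod_list (map (\<lambda>j. iota (h j) (xs ! j)) [0..<?n])))"
    unfolding complex_algebra_prod_list_scale[OF alg] root_weight_def
    by (simp add: prod.distinct_set_conv_list[symmetric])
  finally show ?thesis
    by (simp add: K_cum_def mixed_moment_def module_hom.sum[OF hom] module_hom.scale[OF hom])
qed

lemma K_cum_eq_sum_kernel_weights:
  assumes exch: "exchangeability_system sA phi sU phit iota"
  shows "K_cum sU phit iota \<omega> xs = 1 / of_nat (length xs) *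
    (\<Sum>\<pi>\<in>set_partitions (length xs). phi_pi phit iota \<pi> xs *
      (\<Sum>h\<in>{h \<in> index_functions (length xs). kernel_partition (length xs) h = \<pi>}.
         root_weight \<omega> (length xs) h))"
proof -
  let ?n = "length xs"
  let ?ker = "kernel_partition ?n"
  have "nc_prob_space sU phit"
    using exch unfolding exchangeability_system_def by blast
  then have "K_cum sU phit iota \<omega> xs =
      1 / of_nat ?n * (\<Sum>h\<in>index_functions ?n. root_weight \<omega> ?n h * phi_pi phit iota (?ker h) xs)"
    by (simp add: K_cum_expansion phi_pi_kernel_partition[OF exch])
  also have "(\<Sum>h\<in>index_functions ?n. root_weight \<omega> ?n h * phi_pi phit iota (?ker h) xs) =
      (\<Sum>\<pi>\<in>set_partitions ?n. \<Sum>h\<in>{h \<in> index_functions ?n. ?ker h = \<pi>}.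
         root_weight \<omega> ?n h * phi_pi phit iota (?ker h) xs)"
    by (rule sum.group[symmetric])
      (auto simp: finite_set_partitions kernel_partition_in_set_partitions intro: finite_PiE)
  finally show ?thesis
    by (simp add: sum_distrib_left mult.commute)
qed

theorem theorem2p5:
  fixes sA :: "complex \<Rightarrow> 'a::ring_1 \<Rightarrow> 'a" and phi :: "'a \<Rightarrow> complex"
    and sU :: "complex \<Rightarrow> 'u::ring_1 \<Rightarrow> 'u" and phit :: "'u \<Rightarrow> complex"
    and iota :: "nat \<Rightarrow> 'a \<Rightarrow> 'u" and xs :: "'a list" and \<omega> :: complex
  assumes "exchangeability_system sA phi sU phit iota"
    and "length xs \<ge> 1"
    and "primitive_root (length xs) \<omega>"
  shows "K_cum sU phit iota \<omega> xs =
    (\<Sum>\<pi>\<in>set_partitions (length xs).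
       phi_pi phit iota \<pi> xs *
       of_int (moebius (set_partitions (length xs)) refines \<pi> (top_partition (length xs))))"
proof -
  let ?n = "length xs"
  have "?n > 0"
    using assms(2) by linarith
  have "K_cum sU phit iota \<omega> xs = 1 / of_nat ?n *
      (\<Sum>\<pi>\<in>set_partitions ?n. phi_pi phit iota \<pi> xs *
        (of_nat ?n * of_int (moebius (set_partitions ?n) refines \<pi> (top_partition ?n))))"
    unfolding K_cum_eq_sum_kernel_weights[OF assms(1)]
    using sum_root_weight_kernel_eq_moebius[OF assms(3) \<open>?n > 0\<close>] by simp
  with \<open>?n > 0\<close> show ?thesis
    by (simp add: sum_distrib_left)
qed

end
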